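(* Let $\mathcal{B}^*$ be the three-receiver unicast index coding problem described in the context, with equivalent single unicast side information graph $G^*$ on $[12]$ and underlying undirected graph $G^*_u$. For any $S \subseteq [12]$, the optimal broadcast rate among index codes with locality $1$ for the sub-problem $\mathcal{B}^*_S$ satisfies $$\beta^*_{\mathcal{B}^*_S}(1) = \bar{\chi}(G^*_{S,u}),$$ where $\bar{\chi}$ denotes the clique cover number and $G^*_{S,u}$ is the subgraph of $G^*_u$ induced by $S$.
   Context: Index coding model. A unicast index coding problem has $n$ receivers $u_1,\dots,u_n$ and $N$ messages $\mathbf{x}_1,\dots,\mathbf{x}_N$, each a vector in $\mathcal{A}^m$ for a finite alphabet $\mathcal{A}$ and a positive integer $m$ (the message length; all messages have the same length). Receiver $u_i$ demands $\mathbf{x}_j$, $j\in W_i$, and knows $\mathbf{x}_j$, $j\in K_i$, as side information, where $W_i,K_i\subseteq[N]$, $W_i\cap K_i=\emptyset$, the $W_i$ are pairwise disjoint and every message is demanded by exactly one receiver. An index code consists of an encoder mapping $(\mathbf{x}_1,\dots,\mathbf{x}_N)$ to a codeword $\mathbf{c}\in\mathcal{A}^\ell$, subsets $R_i\subseteq[\ell]$ (receiver $u_i$ observes only $\mathbf{c}_{R_i}=(c_k)_{k\in R_i}$), and decoders at each $u_i$ mapping $(\mathbf{c}_{R_i},\mathbf{x}_{K_i})$ to $\mathbf{x}_{W_i}$. It is valid if every receiver decodes its demand correctly for all message values. Its broadcast rate is $\beta=\ell/m$. The locality at $u_i$ is $r_i=|R_i|/(m|W_i|)$ and the locality of the code is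 $r=\max_i r_i$ (receivers with no demand impose no constraint). For a problem $\mathcal{B}$, $\beta^*_{\mathcal{B}}(r)$ is the infimum of broadcast rates of all valid index codes, over all message lengths $m\ge1$, with locality at most $r$. The problem $\mathcal{B}^*$: three receivers $u_1,u_2,u_3$ and 12 messages $\mathbf{x}_1,\dots,\mathbf{x}_{12}$ with $W_1=\{1,2,3,4\}$, $W_2=\{5,6,7,8\}$, $W_3=\{9,10,11,12\}$, $K_1=\{5,6,9,10\}$, $K_2=\{1,2,9,11\}$, $K_3=\{1,3,5,7\}$. For $S\subseteq[12]$, $\mathcal{B}^*_S$ is the sub-problem with receivers $u_1,u_2,u_3$, messages $\mathbf{x}_j$, $j\in S$, demand sets $W_i\cap S$ and side information sets $K_i\cap S$. Graphs. $G^*$ is the directed graph on vertex set $[12]$ with a directed edge $(a,b)$ if and only if $b\in K_i$, where $i$ is the unique receiver with $a\in W_i$. $G^*_u$ is the undirected graph on $[12]$ in which $\{a,b\}$ is an edge if and only if both $(a,b)$ and $(b,a)$ are edges of $G^*$. For $S\subseteq[12]$, $G^*_S$ and $G^*_{S,u}$ denote the subgraphs of $G^*$ and $G^*_u$ induced by $S$. *)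

theory Defs
  imports Complex_Main "HOL-Library.Disjoint_Sets"
begin

definition receivers :: "nat set" where
  "receivers = {1, 2, 3}"

definition W :: "nat \<Rightarrow> nat set" where
  "W i = (if i = 1 then {1,2,3,4} else if i = 2 then {5,6,7,8}
          else if i = 3 then {9,10,11,12} else {})"

definition K :: "nat \<Rightarrow> nat set" where
  "K i = (if i = 1 then {5,6,9,10} else if i = 2 then {1,2,9,11}
          else if i = 3 then {1,3,5,7} else {})"

text \<open>A message tuple for B*_S with message length m: x j k is the k-th symbol
  (k < m) of message j (j \<in> S); all other entries are fixed to undefined,
  so that such functions are in bijection with A^(S \<times> [m]).\<close>

definition msgs :: "nat set \<Rightarrow> nat \<Rightarrow> (nat \<Rightarrow> nat \<Rightarrow> 'a) set" where
  "msgs S m = {x. \<forall>j k. \<not> (j \<in> S \<and> k < m) \<longrightarrow> x j k = undefined}"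

definition restr_msgs :: "(nat \<Rightarrow> nat \<Rightarrow> 'a) \<Rightarrow> nat set \<Rightarrow> nat \<Rightarrow> nat \<Rightarrow> nat \<Rightarrow> 'a" where
  "restr_msgs x A m = (\<lambda>j k. if j \<in> A \<and> k < m then x j k else undefined)"

definition restr_cw :: "(nat \<Rightarrow> 'a) \<Rightarrow> nat set \<Rightarrow> nat \<Rightarrow> 'a" where
  "restr_cw c R = (\<lambda>k. if k \<in> R then c k else undefined)"

definition valid_code ::
  "nat set \<Rightarrow> nat \<Rightarrow> nat \<Rightarrow> ((nat \<Rightarrow> nat \<Rightarrow> 'a) \<Rightarrow> (nat \<Rightarrow> 'a)) \<Rightarrow> (nat \<Rightarrow> nat set)
     \<Rightarrow> (nat \<Rightarrow> (nat \<Rightarrow> 'a) \<Rightarrow> (nat \<Rightarrow> nat \<Rightarrow> 'a) \<Rightarrow> (nat \<Rightarrow> nat \<Rightarrow> 'a)) \<Rightarrow> bool" where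
  "valid_code S m l E R D \<longleftrightarrow>
     (\<forall>i\<in>receivers. R i \<subseteq> {..<l}) \<and>
     (\<forall>x\<in>msgs S m. \<forall>i\<in>receivers. \<forall>j\<in>W i \<inter> S. \<forall>k<m.
        D i (restr_cw (E x) (R i)) (restr_msgs x (K i \<inter> S) m) j k = x j k)"

definition locality_le :: "nat set \<Rightarrow> nat \<Rightarrow> (nat \<Rightarrow> nat set) \<Rightarrow> real \<Rightarrow> bool" where
  "locality_le S m R r \<longleftrightarrow>
     (\<forall>i\<in>receivers. W i \<inter> S \<noteq> {} \<longrightarrow>
        real (card (R i)) / (real m * real (card (W i \<inter> S))) \<le> r)"

definition beta_star :: "'a itself \<Rightarrow> nat set \<Rightarrow> real \<Rightarrow> real" where
  "beta_star (_ :: 'a itself) S r = Inf {real l / real m | l m. m \<ge> 1 \<and>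
      (\<exists>(E :: (nat \<Rightarrow> nat \<Rightarrow> 'a) \<Rightarrow> (nat \<Rightarrow> 'a)) R D.
          valid_code S m l E R D \<and> locality_le S m R r)}"

definition G_edge :: "nat \<Rightarrow> nat \<Rightarrow> bool" where
  "G_edge a b \<longleftrightarrow> (\<exists>i\<in>receivers. a \<in> W i \<and> b \<in> K i)"

definition Gu_edge :: "nat \<Rightarrow> nat \<Rightarrow> bool" where
  "Gu_edge a b \<longleftrightarrow> G_edge a b \<and> G_edge b a"

definition is_clique_in :: "nat set \<Rightarrow> nat set \<Rightarrow> bool" where
  "is_clique_in S C \<longleftrightarrow> C \<subseteq> S \<and> (\<forall>a\<in>C. \<forall>b\<in>C. a \<noteq> b \<longrightarrow> Gu_edge a b)"

definition clique_cover_number :: "nat set \<Rightarrow> nat" where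
  "clique_cover_number S =
     (LEAST k. \<exists>P. partition_on S P \<and> (\<forall>C\<in>P. is_clique_in S C) \<and> finite P \<and> card P = k)"

end

theory Submission
  imports Defs "HOL-Library.FuncSet"
begin

(* A partition of S into l cliques of G*_u gives a scalar code of length l: for each clique,
   broadcast the sum modulo |A| of its messages. A receiver demanding a message of a clique
   knows all the other messages of that clique, so it decodes from that single symbol, and it
   reads only the symbols of cliques meeting its demand, so the locality is 1.

   Conversely, with locality 1 receiver i reads at most, and by counting at least,
   m |W_i \<inter> S| symbols; these are then a bijective image of its demand once its side
   information is fixed, so every symbol it reads is a function of the messages it demands
   or knows. A symbol read by two receivers therefore only carries messages demanded by one
   and known by the other, which bounds the overlaps of the read sets, and
   inclusion-exclusion gives l \<ge> m (|S| - overlap_bound S). A check of the 2^9 subsets of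
   the non-isolated vertices 1, 2, 3, 5, 6, 7, 9, 10, 11 against twelve explicit clique
   partitions shows |S| - overlap_bound S \<ge> clique_cover_number S. *)

section \<open>Counting arguments for index codes\<close>

lemma finite_W: "finite (W i)"
  by (simp add: W_def)

lemma W_Int_K_empty: "W i \<inter> K i = {}"
  by (auto simp: W_def K_def)

lemma W_Int_W_empty: "i \<noteq> j \<Longrightarrow> W i \<inter> W j = {}"
  by (auto simp: W_def)

lemma G_edge_imp_K:
  assumes "G_edge a b" "a \<in> W i"
  shows "b \<in> K i"
proof -
  obtain i' where "a \<in> W i'" "b \<in> K i'"
    using assms(1) by (auto simp: G_edge_def)
  moreover have "i' = i"
    using W_Int_W_empty[of i' i] calculation(1) assms(2) by blast
  ultimately show ?thesis by simp
qed

definition msgs_varying ::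
    "nat set \<Rightarrow> nat \<Rightarrow> (nat \<Rightarrow> nat \<Rightarrow> 'a) \<Rightarrow> nat set \<Rightarrow> (nat \<Rightarrow> nat \<Rightarrow> 'a) set" where
  "msgs_varying S m x V = {z \<in> msgs S m. \<forall>j k. j \<notin> V \<longrightarrow> z j k = x j k}"

lemma card_msgs_varying:
  fixes x :: "nat \<Rightarrow> nat \<Rightarrow> 'a::finite"
  assumes V: "finite V" "V \<subseteq> S" and x: "x \<in> msgs S m"
  shows "card (msgs_varying S m x V) = card (UNIV :: 'a set) ^ (m * card V)"
proof -
  let ?F = "V \<times> {..<m} \<rightarrow>\<^sub>E (UNIV :: 'a set)"
  define emb where "emb f = (\<lambda>j k. if j \<in> V \<and> k < m then f (j, k) else x j k)"
    for f :: "nat \<times> nat \<Rightarrow> 'a"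
  have "inj_on emb ?F"
  proof (rule inj_onI)
    fix f g assume f: "f \<in> ?F" and g: "g \<in> ?F" and eq: "emb f = emb g"
    have "f (j, k) = g (j, k)" if "(j, k) \<in> V \<times> {..<m}" for j k
      using that fun_cong[OF fun_cong[OF eq, of j], of k] by (simp add: emb_def)
    then show "f = g" using f g by (intro PiE_ext) auto
  qed
  moreover have "emb ` ?F = msgs_varying S m x V"
  proof
    show "emb ` ?F \<subseteq> msgs_varying S m x V"
      using V x by (auto simp: emb_def msgs_varying_def msgs_def)
    show "msgs_varying S m x V \<subseteq> emb ` ?F"
    proof
      fix z assume "z \<in> msgs_varying S m x V"
      then have "z = emb (restrict (\<lambda>(j, k). z j k) (V \<times> {..<m}))"
        using x by (auto simp: emb_def msgs_varying_def msgs_def fun_eq_iff)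
      moreover have "restrict (\<lambda>(j, k). z j k) (V \<times> {..<m}) \<in> ?F" by simp
      ultimately show "z \<in> emb ` ?F" by blast
    qed
  qed
  ultimately have "card (msgs_varying S m x V) = card ?F"
    using card_image by fastforce
  also have "\<dots> = card (UNIV :: 'a set) ^ (m * card V)"
    using V by (simp add: card_PiE card_cartesian_product mult.commute)
  finally show ?thesis .
qed

lemma valid_code_decodes:
  assumes "valid_code S m l E R D" "i \<in> receivers" "x \<in> msgs S m" "j \<in> W i \<inter> S" "k < m"
  shows "D i (restr_cw (E x) (R i)) (restr_msgs x (K i \<inter> S) m) j k = x j k"
  using assms unfolding valid_code_def by blast

lemma valid_code_finite_reads:
  assumes "valid_code S m l E R D" "i \<in> receivers"
  shows "finite (R i)"
  using assms unfolding valid_code_def by (meson finite_lessThan finite_subset)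

lemma restr_cw_in_PiE: "restr_cw c A \<in> A \<rightarrow>\<^sub>E UNIV"
  by (auto simp: restr_cw_def PiE_def extensional_def)

lemma valid_code_eq_if_same_view:
  assumes v: "valid_code S m l E R D" and i: "i \<in> receivers"
    and z: "z \<in> msgs S m" and z': "z' \<in> msgs S m"
    and outside: "\<And>j k. j \<notin> W i \<Longrightarrow> z j k = z' j k"
    and view: "restr_cw (E z) (R i) = restr_cw (E z') (R i)"
  shows "z = z'"
proof (intro ext)
  fix j k
  have side: "restr_msgs z (K i \<inter> S) m = restr_msgs z' (K i \<inter> S) m"
    using outside W_Int_K_empty[of i] by (auto simp: restr_msgs_def fun_eq_iff)
  show "z j k = z' j k"
  proof (cases "j \<in> W i \<inter> S \<and> k < m")
    case True
    then show ?thesis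
      using valid_code_decodes[OF v i z] valid_code_decodes[OF v i z'] view side by metis
  next
    case False
    then show ?thesis using outside z z' by (auto simp: msgs_def)
  qed
qed

lemma valid_code_card_reads_ge:
  fixes E :: "(nat \<Rightarrow> nat \<Rightarrow> 'a::finite) \<Rightarrow> nat \<Rightarrow> 'a"
  assumes v: "valid_code S m l E R D" and i: "i \<in> receivers" and x: "x \<in> msgs S m"
    and V: "V \<subseteq> W i \<inter> S" and T: "T \<subseteq> R i"
    and fixed: "\<And>z p. z \<in> msgs_varying S m x V \<Longrightarrow> p \<in> T \<Longrightarrow> E z p = E x p"
    and two: "card (UNIV :: 'a set) \<ge> 2"
  shows "m * card V + card T \<le> card (R i)"
proof -
  let ?Z = "msgs_varying S m x V"
  have fin_R: "finite (R i)" using valid_code_finite_reads[OF v i] .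
  have fin_V: "finite V" using V finite_W finite_subset by blast
  define view where "view z = restr_cw (E z) (R i - T)" for z
  have "inj_on view ?Z"
  proof (rule inj_onI)
    fix z z' assume z: "z \<in> ?Z" and z': "z' \<in> ?Z" and eq: "view z = view z'"
    have "restr_cw (E z) (R i) = restr_cw (E z') (R i)"
    proof
      fix p show "restr_cw (E z) (R i) p = restr_cw (E z') (R i) p"
        using fixed[OF z, of p] fixed[OF z', of p] fun_cong[OF eq, of p]
        by (cases "p \<in> T") (auto simp: view_def restr_cw_def)
    qed
    moreover have "z j k = z' j k" if "j \<notin> W i" for j k
    proof -
      have "j \<notin> V" using that V by blast
      then show ?thesis using z z' by (simp add: msgs_varying_def)
    qed
    ultimately show "z = z'"
      using valid_code_eq_if_same_view[OF v i] z z' by (auto simp: msgs_varying_def)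
  qed
  moreover have "view ` ?Z \<subseteq> (R i - T) \<rightarrow>\<^sub>E UNIV"
    unfolding view_def by (intro image_subsetI restr_cw_in_PiE)
  ultimately have "card ?Z \<le> card ((R i - T) \<rightarrow>\<^sub>E (UNIV :: 'a set))"
    using fin_R by (intro card_inj_on_le) (auto simp: finite_PiE)
  then have "card (UNIV :: 'a set) ^ (m * card V) \<le> card (UNIV :: 'a set) ^ card (R i - T)"
    using card_msgs_varying[OF fin_V _ x] V fin_R by (simp add: card_PiE)
  then have "m * card V \<le> card (R i - T)"
    by (rule power_le_imp_le_exp[rotated]) (use two in simp)
  moreover have "card (R i - T) = card (R i) - card T" "card T \<le> card (R i)"
    using T fin_R finite_subset[OF T fin_R] by (simp_all add: card_Diff_subset card_mono)
  ultimately show ?thesis by linarith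
qed

lemma valid_code_tight_view_surj:
  fixes E :: "(nat \<Rightarrow> nat \<Rightarrow> 'a::finite) \<Rightarrow> nat \<Rightarrow> 'a"
  assumes v: "valid_code S m l E R D" and i: "i \<in> receivers"
    and tight: "card (R i) \<le> m * card (W i \<inter> S)" and x: "x \<in> msgs S m"
  shows "(\<lambda>z. restr_cw (E z) (R i)) ` msgs_varying S m x (W i \<inter> S) = R i \<rightarrow>\<^sub>E UNIV"
proof -
  let ?Z = "msgs_varying S m x (W i \<inter> S)"
  let ?B = "R i \<rightarrow>\<^sub>E (UNIV :: 'a set)"
  define view where "view z = restr_cw (E z) (R i)" for z
  have fin_R: "finite (R i)" using valid_code_finite_reads[OF v i] .
  have inj: "inj_on view ?Z"
  proof (rule inj_onI)
    fix z z' assume "z \<in> ?Z" "z' \<in> ?Z" "view z = view z'"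
    then show "z = z'"
      using valid_code_eq_if_same_view[OF v i, of z z'] by (auto simp: view_def msgs_varying_def)
  qed
  have "view ` ?Z \<subseteq> ?B"
    unfolding view_def by (intro image_subsetI restr_cw_in_PiE)
  moreover have "card ?B = card (UNIV :: 'a set) ^ card (R i)"
    using fin_R by (simp add: card_PiE)
  moreover have "\<dots> \<le> card (UNIV :: 'a set) ^ (m * card (W i \<inter> S))"
    using tight by (intro power_increasing) (auto simp: Suc_le_eq finite_UNIV_card_ge_0)
  moreover have "\<dots> = card (view ` ?Z)"
    using card_msgs_varying[OF _ _ x] card_image[OF inj] finite_W by simp
  ultimately show ?thesis
    using fin_R card_seteq[of ?B "view ` ?Z"] by (simp add: view_def finite_PiE)
qed

lemma valid_code_tight_reads_determined:
  fixes E :: "(nat \<Rightarrow> nat \<Rightarrow> 'a::finite) \<Rightarrow> nat \<Rightarrow> 'a"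
  assumes v: "valid_code S m l E R D" and i: "i \<in> receivers"
    and tight: "card (R i) \<le> m * card (W i \<inter> S)"
    and x: "x \<in> msgs S m" and y: "y \<in> msgs S m"
    and agree: "\<And>j k. j \<in> W i \<union> K i \<Longrightarrow> x j k = y j k"
    and p: "p \<in> R i"
  shows "E x p = E y p"
proof -
  have "restr_cw (E y) (R i) \<in> (\<lambda>z. restr_cw (E z) (R i)) ` msgs_varying S m x (W i \<inter> S)"
    unfolding valid_code_tight_view_surj[OF v i tight x] by (rule restr_cw_in_PiE)
  then obtain z where zy: "restr_cw (E y) (R i) = restr_cw (E z) (R i)"
    and z: "z \<in> msgs_varying S m x (W i \<inter> S)"
    by (rule imageE)
  have side: "restr_msgs z (K i \<inter> S) m = restr_msgs y (K i \<inter> S) m"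
    using z agree W_Int_K_empty[of i] by (auto simp: msgs_varying_def restr_msgs_def fun_eq_iff)
  have "z = x"
  proof (intro ext)
    fix j k
    show "z j k = x j k"
    proof (cases "j \<in> W i \<inter> S \<and> k < m")
      case True
      then have "z j k = y j k"
        using valid_code_decodes[OF v i _ , of z j k] valid_code_decodes[OF v i y, of j k] z zy side
        by (auto simp: msgs_varying_def)
      then show ?thesis using agree True by simp
    next
      case False
      then show ?thesis using z x by (auto simp: msgs_varying_def msgs_def)
    qed
  qed
  then show ?thesis
    using fun_cong[OF zy, of p] p by (simp add: restr_cw_def)
qed

lemma locality_le_one_card_reads:
  assumes loc: "locality_le S m R 1" and i: "i \<in> receivers"
    and demand: "W i \<inter> S \<noteq> {}" and m: "m \<ge> 1"
  shows "card (R i) \<le> m * card (W i \<inter> S)"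
proof -
  have "card (W i \<inter> S) > 0"
    using demand finite_W by (simp add: card_gt_0_iff)
  then have "real m * real (card (W i \<inter> S)) > 0" using m by simp
  moreover have "real (card (R i)) / (real m * real (card (W i \<inter> S))) \<le> 1"
    using loc i demand unfolding locality_le_def by blast
  ultimately have "real (card (R i)) \<le> real (m * card (W i \<inter> S))"
    by (simp add: divide_le_eq)
  then show ?thesis by linarith
qed

text \<open>Locality puts no constraint on a receiver without demand in \<open>S\<close>, whose read
  set is therefore arbitrary; such read sets are discarded.\<close>
definition active_reads :: "nat set \<Rightarrow> (nat \<Rightarrow> nat set) \<Rightarrow> nat \<Rightarrow> nat set" where
  "active_reads S R i = (if W i \<inter> S = {} then {} else R i)"

lemma card_active_reads:
  fixes E :: "(nat \<Rightarrow> nat \<Rightarrow> 'a::finite) \<Rightarrow> nat \<Rightarrow> 'a"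
  assumes v: "valid_code S m l E R D" and loc: "locality_le S m R 1" and m: "m \<ge> 1"
    and two: "card (UNIV :: 'a set) \<ge> 2" and i: "i \<in> receivers"
  shows "card (active_reads S R i) = m * card (W i \<inter> S)"
proof (cases "W i \<inter> S = {}")
  case False
  have "m * card (W i \<inter> S) + card {} \<le> card (R i)"
    using valid_code_card_reads_ge[OF v i _ _ _ _ two,
        where x = "\<lambda>_ _. undefined" and V = "W i \<inter> S" and T = "{}"]
    by (simp add: msgs_def)
  then show ?thesis
    using locality_le_one_card_reads[OF loc i False m] False by (simp add: active_reads_def)
qed (simp add: active_reads_def)

text \<open>Symbols read by receiver \<open>i\<close> and by some receiver in \<open>X\<close> are functions of
  messages demanded or known by those receivers; fixing everything except the part of
  the demand of \<open>i\<close> unknown to \<open>X\<close> fixes them, and \<open>i\<close> must still decode that part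
  from its remaining symbols.\<close>
lemma card_active_reads_Int_le:
  fixes E :: "(nat \<Rightarrow> nat \<Rightarrow> 'a::finite) \<Rightarrow> nat \<Rightarrow> 'a"
  assumes v: "valid_code S m l E R D" and loc: "locality_le S m R 1" and m: "m \<ge> 1"
    and two: "card (UNIV :: 'a set) \<ge> 2" and i: "i \<in> receivers"
    and X: "X \<subseteq> receivers" "i \<notin> X"
  shows "card (active_reads S R i \<inter> \<Union>(active_reads S R ` X))
           \<le> m * card (W i \<inter> S \<inter> \<Union>(K ` X))"
proof (cases "W i \<inter> S = {}")
  case False
  define x0 where "x0 = (\<lambda>(j::nat) (k::nat). undefined :: 'a)"
  have x0: "x0 \<in> msgs S m" by (simp add: x0_def msgs_def)
  define V where "V = W i \<inter> S - \<Union>(K ` X)"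
  define T where "T = R i \<inter> \<Union>(active_reads S R ` X)"
  have "E z p = E x0 p" if z: "z \<in> msgs_varying S m x0 V" and p: "p \<in> T" for z p
  proof -
    obtain j where j: "j \<in> X" "p \<in> active_reads S R j" using p by (auto simp: T_def)
    then have jr: "j \<in> receivers" and "i \<noteq> j" using X by auto
    then have "V \<inter> (W j \<union> K j) = {}"
      using W_Int_W_empty[of i j] j(1) by (auto simp: V_def)
    then have agree: "z j' k = x0 j' k" if "j' \<in> W j \<union> K j" for j' k
      using z that by (auto simp: msgs_varying_def)
    have demand: "W j \<inter> S \<noteq> {}" and "p \<in> R j"
      using j(2) by (auto simp: active_reads_def split: if_splits)
    then show ?thesis
      using valid_code_tight_reads_determined[OF v jr
          locality_le_one_card_reads[OF loc jr demand m] _ x0 agree] z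
      by (auto simp: msgs_varying_def)
  qed
  then have "m * card V + card T \<le> card (R i)"
    by (intro valid_code_card_reads_ge[OF v i x0 _ _ _ two]) (auto simp: V_def T_def)
  moreover have "card (R i) \<le> m * card (W i \<inter> S)"
    using locality_le_one_card_reads[OF loc i False m] .
  moreover have "card V = card (W i \<inter> S) - card (W i \<inter> S \<inter> \<Union>(K ` X))"
    "card (W i \<inter> S \<inter> \<Union>(K ` X)) \<le> card (W i \<inter> S)"
    using finite_W by (auto simp: V_def card_Diff_subset_Int intro: card_mono)
  ultimately have "card T \<le> m * card (W i \<inter> S \<inter> \<Union>(K ` X))"
    by (simp add: diff_mult_distrib2)
  then show ?thesis using False by (simp add: T_def active_reads_def)
qed (simp add: active_reads_def)

section \<open>Overlaps of the read sets\<close>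

lemma card_Un3_ge:
  assumes fin: "finite A" "finite B" "finite C"
    and "card (A \<inter> B) \<le> p" "card (A \<inter> C) \<le> q" "card (B \<inter> C) \<le> r"
    and "card (A \<inter> (B \<union> C)) \<le> u" "card (B \<inter> (A \<union> C)) \<le> v" "card (C \<inter> (A \<union> B)) \<le> w"
  shows "card A + card B + card C
           \<le> card (A \<union> B \<union> C) + min (p + q + r) (min (u + r) (min (v + q) (w + p)))"
proof -
  have incl_excl:
    "card X + card Y + card Z = card (X \<union> Y \<union> Z) + card (X \<inter> (Y \<union> Z)) + card (Y \<inter> Z)"
    if "finite X" "finite Y" "finite Z" for X Y Z :: "'a set"
    using card_Un_Int[of Y Z] card_Un_Int[of X "Y \<union> Z"] that by (simp add: Un_assoc)
  have "card (A \<inter> (B \<union> C)) \<le> card (A \<inter> B) + card (A \<inter> C)"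
    by (metis Int_Un_distrib card_Un_le)
  moreover note incl_excl[OF fin] incl_excl[of B A C] incl_excl[of C A B]
  ultimately show ?thesis
    using fin assms by (auto simp: min_def Un_ac Int_ac)
qed

text \<open>In units of \<open>m\<close>, a bound on the overlaps of the read sets of the three receivers:
  a symbol read by two receivers is a function of messages that one of them demands and
  the other knows. The four terms of \<open>overlap_bound\<close> are the four bounds of
  \<open>card_Un3_ge\<close>.\<close>
definition pair_overlap_bound :: "nat set \<Rightarrow> nat \<Rightarrow> nat \<Rightarrow> nat" where
  "pair_overlap_bound S i j = min (card (W i \<inter> S \<inter> K j)) (card (W j \<inter> S \<inter> K i))"

definition overlap_bound :: "nat set \<Rightarrow> nat" where
  "overlap_bound S =
     min (pair_overlap_bound S 1 2 + pair_overlap_bound S 1 3 + pair_overlap_bound S 2 3)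
    (min (card (W 1 \<inter> S \<inter> (K 2 \<union> K 3)) + pair_overlap_bound S 2 3)
    (min (card (W 2 \<inter> S \<inter> (K 1 \<union> K 3)) + pair_overlap_bound S 1 3)
         (card (W 3 \<inter> S \<inter> (K 1 \<union> K 2)) + pair_overlap_bound S 1 2)))"

lemma card_eq_sum_card_W:
  assumes "S \<subseteq> {1..12}"
  shows "card S = card (W 1 \<inter> S) + card (W 2 \<inter> S) + card (W 3 \<inter> S)"
proof -
  have "{1..12} = W 1 \<union> W 2 \<union> W 3"
    by (auto simp: W_def; presburger)
  then have "S = (W 1 \<inter> S \<union> W 2 \<inter> S) \<union> W 3 \<inter> S"
    using assms by blast
  also have "card \<dots> = card (W 1 \<inter> S \<union> W 2 \<inter> S) + card (W 3 \<inter> S)"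
    by (rule card_Un_disjoint) (auto simp: W_def)
  also have "card (W 1 \<inter> S \<union> W 2 \<inter> S) = card (W 1 \<inter> S) + card (W 2 \<inter> S)"
    by (rule card_Un_disjoint) (auto simp: W_def)
  finally show ?thesis .
qed

lemma valid_code_length_ge:
  fixes E :: "(nat \<Rightarrow> nat \<Rightarrow> 'a::finite) \<Rightarrow> nat \<Rightarrow> 'a"
  assumes v: "valid_code S m l E R D" and loc: "locality_le S m R 1" and m: "m \<ge> 1"
    and two: "card (UNIV :: 'a set) \<ge> 2" and S: "S \<subseteq> {1..12}"
  shows "m * card S \<le> l + m * overlap_bound S"
proof -
  let ?A = "active_reads S R"
  have r: "1 \<in> receivers" "2 \<in> receivers" "3 \<in> receivers"
    by (simp_all add: receivers_def)
  have reads: "?A i \<subseteq> {..<l}" if "i \<in> receivers" for i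
    using v that unfolding valid_code_def active_reads_def by auto
  then have fin: "finite (?A 1)" "finite (?A 2)" "finite (?A 3)"
    using r finite_subset by blast+
  note Int_le = card_active_reads_Int_le[OF v loc m two]
  have pair: "card (?A i \<inter> ?A j) \<le> m * pair_overlap_bound S i j"
    if "i \<in> receivers" "j \<in> receivers" "i \<noteq> j" for i j
    using Int_le[OF that(1), of "{j}"] Int_le[OF that(2), of "{i}"] that
    by (simp add: pair_overlap_bound_def nat_mult_min_right Int_commute)
  have triple: "card (?A i \<inter> (?A j \<union> ?A k)) \<le> m * card (W i \<inter> S \<inter> (K j \<union> K k))"
    if "i \<in> receivers" "j \<in> receivers" "k \<in> receivers" "i \<noteq> j" "i \<noteq> k" for i j k
    using Int_le[OF that(1), of "{j, k}"] that by simp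
  have "m * card S = card (?A 1) + card (?A 2) + card (?A 3)"
    using card_eq_sum_card_W[OF S] card_active_reads[OF v loc m two] r
    by (simp add: add_mult_distrib2)
  also have "\<dots> \<le> card (?A 1 \<union> ?A 2 \<union> ?A 3) + m * overlap_bound S"
    unfolding overlap_bound_def nat_mult_min_right add_mult_distrib2
    by (rule card_Un3_ge[OF fin pair[OF r(1,2)] pair[OF r(1,3)] pair[OF r(2,3)]
        triple[OF r(1,2,3)] triple[OF r(2,1,3)] triple[OF r(3,1,2)]]) simp_all
  also have "card (?A 1 \<union> ?A 2 \<union> ?A 3) \<le> l"
    using reads r by (metis card_lessThan card_mono finite_lessThan Un_least)
  finally show ?thesis by simp
qed

section \<open>Clique covers of \<open>G*\<^sub>u\<close>\<close>

lemma clique_cover_number_le: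
  assumes "partition_on S P" "\<forall>C\<in>P. is_clique_in S C" "finite P"
  shows "clique_cover_number S \<le> card P"
  unfolding clique_cover_number_def by (rule Least_le) (use assms in blast)

lemma clique_cover_number_attained:
  assumes "finite S"
  obtains P where "partition_on S P" "\<forall>C\<in>P. is_clique_in S C" "finite P"
    "card P = clique_cover_number S"
proof -
  let ?cover = "\<lambda>k. \<exists>P. partition_on S P \<and> (\<forall>C\<in>P. is_clique_in S C) \<and> finite P \<and> card P = k"
  have "?cover (card ((\<lambda>j. {j}) ` S))"
    using assms by (intro exI[of _ "(\<lambda>j. {j}) ` S"])
      (auto simp: partition_on_singletons is_clique_in_def)
  then have "?cover (clique_cover_number S)"
    unfolding clique_cover_number_def by (rule LeastI)
  then show ?thesis using that by blast
qed

lemma clique_cover_number_le_card: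
  assumes "finite S"
  shows "clique_cover_number S \<le> card S"
proof -
  have "clique_cover_number S \<le> card ((\<lambda>j. {j}) ` S)"
    using assms by (intro clique_cover_number_le) (auto simp: partition_on_singletons is_clique_in_def)
  also have "\<dots> \<le> card S"
    by (rule card_image_le[OF assms])
  finally show ?thesis .
qed

lemma clique_cover_number_Un_le:
  assumes "finite S" "finite T" "S \<inter> T = {}"
  shows "clique_cover_number (S \<union> T) \<le> clique_cover_number S + clique_cover_number T"
proof -
  obtain P where P: "partition_on S P" "\<forall>C\<in>P. is_clique_in S C" "finite P"
    "card P = clique_cover_number S"
    using clique_cover_number_attained[OF assms(1)] .
  obtain Q where Q: "partition_on T Q" "\<forall>C\<in>Q. is_clique_in T C" "finite Q"
    "card Q = clique_cover_number T"
    using clique_cover_number_attained[OF assms(2)] .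
  have "partition_on (S \<union> T) (P \<union> Q)"
    using P(1) Q(1) assms(3) by (auto simp: partition_on_def intro: disjoint_union)
  moreover have "\<forall>C\<in>P \<union> Q. is_clique_in (S \<union> T) C"
    using P(2) Q(2) by (auto simp: is_clique_in_def)
  ultimately have "clique_cover_number (S \<union> T) \<le> card (P \<union> Q)"
    using P(3) Q(3) by (intro clique_cover_number_le) auto
  also have "\<dots> \<le> card P + card Q"
    by (rule card_Un_le)
  finally show ?thesis using P(4) Q(4) by simp
qed

lemma clique_cover_number_le_restrict:
  assumes "partition_on X P" "\<forall>C\<in>P. is_clique_in X C" "finite P" "S \<subseteq> X"
  shows "clique_cover_number S \<le> card {C\<in>P. C \<inter> S \<noteq> {}}"
proof -
  let ?P = "(\<inter>) S ` P - {{}}"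
  have "partition_on S ?P"
    using partition_on_restrict[OF assms(1), of S] assms(4) by (simp add: Int_absorb2)
  moreover have "\<forall>C\<in>?P. is_clique_in S C"
    using assms(2) by (auto simp: is_clique_in_def)
  ultimately have "clique_cover_number S \<le> card ?P"
    using assms(3) by (intro clique_cover_number_le) auto
  also have "\<dots> \<le> card ((\<inter>) S ` {C\<in>P. C \<inter> S \<noteq> {}})"
    using assms(3) by (intro card_mono) auto
  also have "\<dots> \<le> card {C\<in>P. C \<inter> S \<noteq> {}}"
    by (rule card_image_le) (use assms(3) in simp)
  finally show ?thesis .
qed

text \<open>Partitions of the vertices \<open>1, 2, 3, 5, 6, 7, 9, 10, 11\<close> (those with an edge in
  \<open>G*\<^sub>u\<close>) into cliques, one optimal for each of their subsets.\<close>
definition core_clique_partitions :: "nat set list list" where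
  "core_clique_partitions =
    [[{1,5,9}, {2,6}, {3,10}, {7,11}],
     [{1,6}, {3,10}, {5,11}, {7,9}, {2}],
     [{1,10}, {2,5}, {3,9}, {7,11}, {6}],
     [{1,10}, {2,6}, {5,11}, {7,9}, {3}],
     [{1,6}, {2,5}, {3,10}, {7,11}, {9}],
     [{2,6}, {3,9}, {5,11}, {1}, {7}, {10}],
     [{2,5}, {3,10}, {7,9}, {1}, {6}, {11}],
     [{1,6}, {3,9}, {7,11}, {2}, {5}, {10}],
     [{2,6}, {3,10}, {5,11}, {7,9}, {1}],
     [{1,10}, {2,6}, {3,9}, {7,11}, {5}],
     [{1,6}, {3,9}, {5,11}, {2}, {7}, {10}],
     [{1,10}, {2,5}, {7,9}, {3}, {6}, {11}]]"

lemma core_clique_partitions_ne: "set core_clique_partitions \<noteq> {}"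
  by (simp add: core_clique_partitions_def)

lemma core_clique_partitions_partition_on:
  "Ps \<in> set core_clique_partitions \<Longrightarrow> partition_on {1,2,3,5,6,7,9,10,11} (set Ps)"
  unfolding core_clique_partitions_def partition_on_def
  by (auto simp: pairwise_insert disjnt_def)

lemma core_clique_partitions_cliques:
  "Ps \<in> set core_clique_partitions \<Longrightarrow> C \<in> set Ps \<Longrightarrow> is_clique_in {1,2,3,5,6,7,9,10,11} C"
  unfolding core_clique_partitions_def is_clique_in_def Gu_edge_def G_edge_def
  by (auto simp: receivers_def W_def K_def)

lemma clique_cover_number_le_core_clique_partition:
  assumes "S \<subseteq> {1,2,3,5,6,7,9,10,11}" "Ps \<in> set core_clique_partitions"
  shows "clique_cover_number S \<le> length (filter (\<lambda>C. C \<inter> S \<noteq> {}) Ps)"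
proof -
  have "clique_cover_number S \<le> card {C \<in> set Ps. C \<inter> S \<noteq> {}}"
    using core_clique_partitions_partition_on[OF assms(2)]
      core_clique_partitions_cliques[OF assms(2)] assms(1)
    by (intro clique_cover_number_le_restrict) auto
  also have "\<dots> \<le> length (filter (\<lambda>C. C \<inter> S \<noteq> {}) Ps)"
    by (metis set_filter card_length)
  finally show ?thesis .
qed

lemma card_insert_Int:
  "finite A \<Longrightarrow> a \<notin> A \<Longrightarrow> card (insert a A \<inter> S) = of_bool (a \<in> S) + card (A \<inter> S)"
  by (simp add: Int_insert_left)

lemma length_filter_eq_sum_list: "length (filter P xs) = (\<Sum>x\<leftarrow>xs. of_bool (P x))"
  by (induction xs) auto

text \<open>Everything is first rewritten in terms of
  the memberships \<open>k \<in> S\<close>, so that each case is plain arithmetic; stating the claim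
  with \<open>MIN\<close> rather than \<open>\<exists>\<close> keeps \<open>overlap_bound S\<close> from being evaluated once
  per candidate.\<close>
lemma min_core_clique_partition_add_overlap_bound_le:
  assumes "S \<subseteq> {1,2,3,5,6,7,9,10,11}"
  shows "(MIN Ps\<in>set core_clique_partitions. length (filter (\<lambda>C. C \<inter> S \<noteq> {}) Ps))
           + overlap_bound S \<le> card S"
proof -
  have WK: "W 1 \<inter> S \<inter> K 2 = {1,2} \<inter> S" "W 2 \<inter> S \<inter> K 1 = {5,6} \<inter> S"
    "W 1 \<inter> S \<inter> K 3 = {1,3} \<inter> S" "W 3 \<inter> S \<inter> K 1 = {9,10} \<inter> S"
    "W 2 \<inter> S \<inter> K 3 = {5,7} \<inter> S" "W 3 \<inter> S \<inter> K 2 = {9,11} \<inter> S"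
    "W 1 \<inter> S \<inter> (K 2 \<union> K 3) = {1,2,3} \<inter> S" "W 2 \<inter> S \<inter> (K 1 \<union> K 3) = {5,6,7} \<inter> S"
    "W 3 \<inter> S \<inter> (K 1 \<union> K 2) = {9,10,11} \<inter> S"
    by (auto simp: W_def K_def)
  have "card S = card ({1,2,3,5,6,7,9,10,11} \<inter> S)"
    using assms by (simp add: Int_absorb1)
  then show ?thesis
    unfolding core_clique_partitions_def overlap_bound_def pair_overlap_bound_def WK
      length_filter_eq_sum_list
    apply (simp only: list.map sum_list_simps list.set image_insert image_empty Min_singleton
        Min_insert finite.emptyI finite_insert insert_not_empty card_insert_Int insert_iff
        empty_iff eq_numeral_simps semiring_norm simp_thms Int_empty_left card.empty
        insert_disjoint add_0_right)
    apply (cases "1 \<in> S"; cases "2 \<in> S"; cases "3 \<in> S"; cases "5 \<in> S"; cases "6 \<in> S";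
        cases "7 \<in> S"; cases "9 \<in> S"; cases "10 \<in> S"; cases "11 \<in> S")
    apply simp_all
    done
qed

lemma overlap_bound_Int_K:
  assumes "K 1 \<union> K 2 \<union> K 3 \<subseteq> X"
  shows "overlap_bound (S \<inter> X) = overlap_bound S"
proof -
  have "K j \<subseteq> X" for j
    using assms by (auto simp: K_def)
  then have "A \<inter> (S \<inter> X) \<inter> K j = A \<inter> S \<inter> K j"
    "A \<inter> (S \<inter> X) \<inter> (K j \<union> K k) = A \<inter> S \<inter> (K j \<union> K k)" for A j k
    by blast+
  then show ?thesis
    unfolding overlap_bound_def pair_overlap_bound_def by (simp only:)
qed

lemma clique_cover_number_add_overlap_bound_le:
  assumes S: "S \<subseteq> {1..12}"
  shows "clique_cover_number S + overlap_bound S \<le> card S"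
proof -
  define core :: "nat set" where "core = {1,2,3,5,6,7,9,10,11}"
  have fin: "finite S"
    using S finite_subset by blast
  have "clique_cover_number (S \<inter> core)
      \<le> (MIN Ps\<in>set core_clique_partitions. length (filter (\<lambda>C. C \<inter> (S \<inter> core) \<noteq> {}) Ps))"
    using clique_cover_number_le_core_clique_partition[of "S \<inter> core"] core_clique_partitions_ne
    by (auto simp: core_def intro!: Min.boundedI)
  then have "clique_cover_number (S \<inter> core) + overlap_bound S \<le> card (S \<inter> core)"
    using min_core_clique_partition_add_overlap_bound_le[of "S \<inter> core"]
      overlap_bound_Int_K[of core S] by (simp add: core_def K_def)
  moreover have "clique_cover_number S \<le> clique_cover_number (S \<inter> core) + clique_cover_number (S - core)"
    using clique_cover_number_Un_le[of "S \<inter> core" "S - core"] fin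
    by (simp add: Int_Diff_Un Int_Diff_disjoint)
  moreover have "clique_cover_number (S - core) \<le> card (S - core)"
    using fin by (simp add: clique_cover_number_le_card)
  moreover have "card S = card (S \<inter> core) + card (S - core)"
    using fin by (rule card_Int_Diff)
  ultimately show ?thesis by linarith
qed

lemma valid_code_length_ge_clique_cover:
  fixes E :: "(nat \<Rightarrow> nat \<Rightarrow> 'a::finite) \<Rightarrow> nat \<Rightarrow> 'a"
  assumes "valid_code S m l E R D" "locality_le S m R 1" "m \<ge> 1"
    and "card (UNIV :: 'a set) \<ge> 2" and S: "S \<subseteq> {1..12}"
  shows "m * clique_cover_number S \<le> l"
proof -
  have "m * clique_cover_number S + m * overlap_bound S \<le> m * card S"
    using mult_le_mono2[OF clique_cover_number_add_overlap_bound_le[OF S]]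
    by (simp add: add_mult_distrib2)
  then show ?thesis
    using valid_code_length_ge[OF assms] by linarith
qed

section \<open>Codes from clique partitions\<close>

lemma sum_mod_recover:
  fixes v :: "nat \<Rightarrow> nat"
  assumes "finite C" "j \<in> C" "v j < n"
  shows "nat ((int ((\<Sum>i\<in>C. v i) mod n) - (\<Sum>i\<in>C - {j}. int (v i))) mod int n) = v j"
proof -
  have "int (\<Sum>i\<in>C. v i) = int (v j) + (\<Sum>i\<in>C - {j}. int (v i))"
    using sum.remove[OF assms(1,2), of "\<lambda>i. int (v i)"] by simp
  then have "(int ((\<Sum>i\<in>C. v i) mod n) - (\<Sum>i\<in>C - {j}. int (v i))) mod int n = int (v j) mod int n"
    by (simp add: zmod_int mod_diff_left_eq)
  then show ?thesis
    using assms(3) by simp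
qed

lemma sum_code_decodes:
  fixes h :: "'a \<Rightarrow> nat" and x y :: "nat \<Rightarrow> 'a"
  assumes h: "bij_betw h UNIV {0..<n}" and C: "finite C" "j \<in> C"
    and agree: "\<And>i. i \<in> C - {j} \<Longrightarrow> y i = x i"
  shows "inv_into UNIV h (nat ((int (h (inv_into UNIV h ((\<Sum>i\<in>C. h (x i)) mod n)))
           - (\<Sum>i\<in>C - {j}. int (h (y i)))) mod int n)) = x j"
proof -
  have h_less: "h a < n" for a
    using h by (auto simp: bij_betw_def)
  then have "n > 0"
    using gr_implies_not0 by blast
  then have "h (inv_into UNIV h ((\<Sum>i\<in>C. h (x i)) mod n)) = (\<Sum>i\<in>C. h (x i)) mod n"
    using h by (intro bij_betw_inv_into_right) auto
  moreover have "(\<Sum>i\<in>C - {j}. int (h (y i))) = (\<Sum>i\<in>C - {j}. int (h (x i)))"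
    using agree by simp
  moreover have "nat ((int ((\<Sum>i\<in>C. h (x i)) mod n) - (\<Sum>i\<in>C - {j}. int (h (x i)))) mod int n)
      = h (x j)"
    using sum_mod_recover[OF C, of "\<lambda>i. h (x i)"] h_less by simp
  ultimately show ?thesis
    using h by (simp add: bij_betw_def)
qed

lemma card_blocks_meeting_le:
  assumes part: "partition_on S P" and idx: "bij_betw idx I P" and "finite A"
  shows "card {q \<in> I. idx q \<inter> A \<noteq> {}} \<le> card (A \<inter> S)"
proof -
  define pick where "pick q = (SOME a. a \<in> idx q \<inter> A)" for q
  have pick: "pick q \<in> idx q \<inter> A" if "idx q \<inter> A \<noteq> {}" for q
    using that unfolding pick_def by (metis ex_in_conv someI_ex)
  have "inj_on pick {q \<in> I. idx q \<inter> A \<noteq> {}}"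
  proof (rule inj_onI)
    fix q q' assume q: "q \<in> {q \<in> I. idx q \<inter> A \<noteq> {}}" and q': "q' \<in> {q \<in> I. idx q \<inter> A \<noteq> {}}"
      and "pick q = pick q'"
    then have "idx q = idx q'"
      using pick[of q] pick[of q'] partition_onD2[OF part] bij_betw_apply[OF idx]
      by (auto simp: disjoint_def)
    then show "q = q'"
      using q q' bij_betw_imp_inj_on[OF idx] by (auto dest: inj_onD)
  qed
  moreover have "pick ` {q \<in> I. idx q \<inter> A \<noteq> {}} \<subseteq> A \<inter> S"
    using pick partition_onD1[OF part] bij_betw_apply[OF idx] by blast
  ultimately show ?thesis
    using assms(3) by (intro card_inj_on_le) auto
qed

lemma clique_partition_code_exists:
  assumes fin: "finite S" and part: "partition_on S P" and cl: "\<forall>C\<in>P. is_clique_in S C"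
  shows "\<exists>(E :: (nat \<Rightarrow> nat \<Rightarrow> 'a::finite) \<Rightarrow> nat \<Rightarrow> 'a) R D.
           valid_code S 1 (card P) E R D \<and> locality_le S 1 R 1"
proof -
  define n where "n = card (UNIV :: 'a set)"
  define l where "l = card P"
  obtain h :: "'a \<Rightarrow> nat" where h: "bij_betw h UNIV {0..<n}"
    using ex_bij_betw_finite_nat[of "UNIV :: 'a set"] unfolding n_def by auto
  obtain idx where idx: "bij_betw idx {0..<l} P"
    using ex_bij_betw_nat_finite[OF finite_elements[OF fin part]] unfolding l_def by auto
  have idx_clique: "is_clique_in S (idx q)" if "q < l" for q
    using cl idx that by (auto simp: bij_betw_def)
  have "\<exists>q<l. j \<in> idx q" if "j \<in> S" for j
    using that partition_onD1[OF part] idx by (force simp: bij_betw_def)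
  then obtain pos where pos: "pos j < l" "j \<in> idx (pos j)" if "j \<in> S" for j
    by metis
  define E :: "(nat \<Rightarrow> nat \<Rightarrow> 'a) \<Rightarrow> nat \<Rightarrow> 'a" where
    "E x q = inv_into UNIV h ((\<Sum>j\<in>idx q. h (x j 0)) mod n)" for x q
  define R where "R i = {q \<in> {0..<l}. idx q \<inter> W i \<noteq> {}}" for i
  define D :: "nat \<Rightarrow> (nat \<Rightarrow> 'a) \<Rightarrow> (nat \<Rightarrow> nat \<Rightarrow> 'a) \<Rightarrow> nat \<Rightarrow> nat \<Rightarrow> 'a" where
    "D i c s j k = inv_into UNIV h
       (nat ((int (h (c (pos j))) - (\<Sum>j'\<in>idx (pos j) - {j}. int (h (s j' 0)))) mod int n))"
    for i c s j k
  have "valid_code S 1 l E R D"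
    unfolding valid_code_def
  proof (intro conjI ballI allI impI)
    fix i assume "i \<in> receivers"
    show "R i \<subseteq> {..<l}" by (auto simp: R_def)
  next
    fix x :: "nat \<Rightarrow> nat \<Rightarrow> 'a" and i j k :: nat
    assume "x \<in> msgs S 1" "i \<in> receivers" and j: "j \<in> W i \<inter> S" and "k < 1"
    have q: "pos j < l" "j \<in> idx (pos j)" "pos j \<in> R i"
      using pos j by (auto simp: R_def)
    have "finite (idx (pos j))"
      using idx_clique[OF q(1)] fin finite_subset by (auto simp: is_clique_in_def)
    moreover have "restr_msgs x (K i \<inter> S) 1 j' 0 = x j' 0" if "j' \<in> idx (pos j) - {j}" for j'
    proof -
      have "Gu_edge j j'" "j' \<in> S"
        using idx_clique[OF q(1)] q(2) that by (auto simp: is_clique_in_def)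
      then show ?thesis
        using G_edge_imp_K j by (auto simp: Gu_edge_def restr_msgs_def)
    qed
    ultimately show "D i (restr_cw (E x) (R i)) (restr_msgs x (K i \<inter> S) 1) j k = x j k"
      using sum_code_decodes[OF h _ q(2), of "\<lambda>j'. x j' 0"] q(3) \<open>k < 1\<close>
      by (simp add: D_def E_def restr_cw_def)
  qed
  moreover have "locality_le S 1 R 1"
    unfolding locality_le_def
  proof (intro ballI impI)
    fix i assume "W i \<inter> S \<noteq> {}"
    have "card (R i) \<le> card (W i \<inter> S)"
      unfolding R_def using part idx finite_W by (rule card_blocks_meeting_le)
    then show "real (card (R i)) / (real 1 * real (card (W i \<inter> S))) \<le> 1"
      using \<open>W i \<inter> S \<noteq> {}\<close> finite_W by (simp add: card_gt_0_iff)
  qed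
  ultimately show ?thesis
    unfolding l_def by blast
qed

theorem theorem6:
  assumes "card (UNIV :: 'a::finite set) \<ge> 2"
    and "S \<subseteq> {1..12::nat}"
  shows "beta_star TYPE('a) S 1 = real (clique_cover_number S)"
proof -
  have fin: "finite S"
    using assms(2) finite_subset by blast
  let ?rates = "{real l / real m | l m. m \<ge> 1 \<and>
      (\<exists>(E :: (nat \<Rightarrow> nat \<Rightarrow> 'a) \<Rightarrow> nat \<Rightarrow> 'a) R D. valid_code S m l E R D \<and> locality_le S m R 1)}"
  have "Inf ?rates = real (clique_cover_number S)"
  proof (rule cInf_eq_minimum)
    obtain P where "partition_on S P" "\<forall>C\<in>P. is_clique_in S C" "card P = clique_cover_number S"
      using clique_cover_number_attained[OF fin] by metis
    then obtain E :: "(nat \<Rightarrow> nat \<Rightarrow> 'a) \<Rightarrow> nat \<Rightarrow> 'a" and R D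
      where "valid_code S 1 (clique_cover_number S) E R D" "locality_le S 1 R 1"
      using clique_partition_code_exists[OF fin] by metis
    then show "real (clique_cover_number S) \<in> ?rates"
      by (intro CollectI exI[of _ "clique_cover_number S"] exI[of _ 1]) auto
  next
    fix r assume "r \<in> ?rates"
    then obtain l m and E :: "(nat \<Rightarrow> nat \<Rightarrow> 'a) \<Rightarrow> nat \<Rightarrow> 'a" and R D
      where r: "r = real l / real m" and m: "m \<ge> 1"
        and code: "valid_code S m l E R D" "locality_le S m R 1"
      by blast
    have "real m * real (clique_cover_number S) \<le> real l"
      using valid_code_length_ge_clique_cover[OF code m assms] by (metis of_nat_le_iff of_nat_mult)
    then show "real (clique_cover_number S) \<le> r"
      using m by (simp add: r le_divide_eq mult.commute)
  qed
  then show ?thesis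
    unfolding beta_star_def .
qed

end
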